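(* Let $1<\rho<2$ be real and $Z[\rho]=\{\pm z: z=\sum_{k=0}^n z_k\rho^k,\ n\ge0,\ z_k\in\{0,1\}\}$. If $\lambda>0$ and $\lambda\mathbb{Z}\subset Z[\rho]$, then $\lambda$ and $\rho$ are of the same type (both algebraic or both transcendental). If $\rho$ is algebraic, then $\rho$ and $\lambda$ both lie in the number field $\mathbb{Q}(\rho)$ and are algebraic integers. *)

theory Defs
  imports "HOL-Computational_Algebra.Polynomial" Complex_Main
begin

definition Zrho :: "real \<Rightarrow> real set" where
  "Zrho \<rho> = {x. \<exists>(n::nat) (zs::nat \<Rightarrow> real). (\<forall>k. zs k \<in> {0,1}) \<and>
      (x = (\<Sum>k=0..n. zs k * \<rho> ^ k) \<or> x = - (\<Sum>k=0..n. zs k * \<rho> ^ k))}"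

definition subfield_real :: "real set \<Rightarrow> bool" where
  "subfield_real K \<longleftrightarrow> 0 \<in> K \<and> 1 \<in> K \<and>
     (\<forall>x\<in>K. \<forall>y\<in>K. x + y \<in> K \<and> x * y \<in> K) \<and>
     (\<forall>x\<in>K. - x \<in> K) \<and> (\<forall>x\<in>K. x \<noteq> 0 \<longrightarrow> inverse x \<in> K)"

definition rat_adjoin :: "real \<Rightarrow> real set" where
  "rat_adjoin \<rho> = \<Inter>{K. subfield_real K \<and> \<rho> \<in> K}"

end

theory Submission imports Defs "Jordan_Normal_Form.Char_Poly" begin

text \<open>Write \<open>\<lambda> = p(\<rho>)\<close> and \<open>m\<lambda> = q(\<rho>)\<close> with 0/1 digit polynomials \<open>p, q\<close>. For \<open>m\<close>
  large, \<open>q\<close> has a digit above \<open>deg p\<close>, so \<open>q - m p\<close> is a monic integer polynomial vanishing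
  at \<open>\<rho>\<close>. So \<open>\<rho>\<close> is always an algebraic integer (the transcendental case never occurs, and
  only \<open>\<rho> \<ge> 0\<close> is needed), and \<open>\<lambda> = p(\<rho>)\<close> lies in \<open>\<int>[\<rho>] \<subseteq> \<rat>(\<rho>)\<close>.
  That \<open>\<int>[\<rho>]\<close> consists of algebraic integers is seen by realising \<open>\<rho>\<close> as an eigenvalue of
  its companion matrix: the eigenvalues of integer matrices sharing a fixed eigenvector form a
  ring, and each is a root of a monic integer characteristic polynomial.\<close>

definition int_mat_eigenvalues :: "nat \<Rightarrow> 'a :: comm_ring_1 vec \<Rightarrow> 'a set" where
  "int_mat_eigenvalues n v =
     {x. \<exists>A \<in> carrier_mat n n. map_mat of_int A *\<^sub>v v = x \<cdot>\<^sub>v v}"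

lemma int_mat_eigenvalues_algebraic_int:
  fixes v :: "'a :: field_char_0 vec"
  assumes "x \<in> int_mat_eigenvalues n v" "v \<in> carrier_vec n" "v \<noteq> 0\<^sub>v n"
  shows "algebraic_int x"
proof -
  obtain A where A: "A \<in> carrier_mat n n" "map_mat of_int A *\<^sub>v v = x \<cdot>\<^sub>v v"
    using assms(1) unfolding int_mat_eigenvalues_def by auto
  have A': "map_mat of_int A \<in> carrier_mat n n"
    using A(1) by simp
  have "eigenvalue (map_mat of_int A) x"
    unfolding eigenvalue_def eigenvector_def using assms A by auto
  then have "poly (char_poly (map_mat of_int A)) x = 0"
    using eigenvalue_root_char_poly[OF A'] by blast
  then have "poly (map_poly of_int (char_poly A)) x = 0"
    using of_int_hom.char_poly_hom[OF A(1)] by metis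
  moreover have "lead_coeff (char_poly A) = 1"
    using degree_monic_char_poly[OF A(1)] by simp
  ultimately show ?thesis
    unfolding algebraic_int_altdef_ipoly by blast
qed

lemma int_mat_eigenvalues_zero:
  assumes "v \<in> carrier_vec n"
  shows "0 \<in> int_mat_eigenvalues n v"
proof -
  have "map_mat of_int (0\<^sub>m n n) *\<^sub>v v = 0 \<cdot>\<^sub>v v"
    using assms by (intro eq_vecI) (auto simp: scalar_prod_def)
  then show ?thesis
    unfolding int_mat_eigenvalues_def by (intro CollectI bexI[of _ "0\<^sub>m n n"]) auto
qed

lemma int_mat_eigenvalues_one:
  assumes "v \<in> carrier_vec n"
  shows "1 \<in> int_mat_eigenvalues n v"
  unfolding int_mat_eigenvalues_def using assms
  by (intro CollectI bexI[of _ "1\<^sub>m n"]) (auto simp: of_int_hom.mat_hom_one)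

lemma int_mat_eigenvalues_add:
  assumes "x \<in> int_mat_eigenvalues n v" "y \<in> int_mat_eigenvalues n v" "v \<in> carrier_vec n"
  shows "x + y \<in> int_mat_eigenvalues n v"
proof -
  obtain A where A: "A \<in> carrier_mat n n" "map_mat of_int A *\<^sub>v v = x \<cdot>\<^sub>v v"
    using assms(1) unfolding int_mat_eigenvalues_def by auto
  obtain B where B: "B \<in> carrier_mat n n" "map_mat of_int B *\<^sub>v v = y \<cdot>\<^sub>v v"
    using assms(2) unfolding int_mat_eigenvalues_def by auto
  have hom: "map_mat of_int (A + B) = map_mat of_int A + map_mat of_int B"
    using A B by (intro eq_matI) auto
  have "map_mat of_int (A + B) *\<^sub>v v = x \<cdot>\<^sub>v v + y \<cdot>\<^sub>v v"
    unfolding hom using A B assms(3) by (subst add_mult_distrib_mat_vec[of _ n n]) auto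
  also have "\<dots> = (x + y) \<cdot>\<^sub>v v"
    by (simp add: add_smult_distrib_vec)
  finally show ?thesis
    unfolding int_mat_eigenvalues_def using A B by auto
qed

lemma int_mat_eigenvalues_mult:
  fixes v :: "'a :: field vec"
  assumes "x \<in> int_mat_eigenvalues n v" "y \<in> int_mat_eigenvalues n v" "v \<in> carrier_vec n"
  shows "x * y \<in> int_mat_eigenvalues n v"
proof -
  obtain A where A: "A \<in> carrier_mat n n" "map_mat of_int A *\<^sub>v v = x \<cdot>\<^sub>v v"
    using assms(1) unfolding int_mat_eigenvalues_def by auto
  obtain B where B: "B \<in> carrier_mat n n" "map_mat of_int B *\<^sub>v v = y \<cdot>\<^sub>v v"
    using assms(2) unfolding int_mat_eigenvalues_def by auto
  have "map_mat of_int (A * B) *\<^sub>v v = map_mat of_int A *\<^sub>v (y \<cdot>\<^sub>v v)"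
    unfolding of_int_hom.mat_hom_mult[OF A(1) B(1)] using A B assms(3)
    by (subst assoc_mult_mat_vec[of _ n n _ n]) auto
  also have "\<dots> = y \<cdot>\<^sub>v (map_mat of_int A *\<^sub>v v)"
    using A(1) assms(3) by (intro mult_mat_vec[of _ n n]) auto
  also have "\<dots> = y \<cdot>\<^sub>v (x \<cdot>\<^sub>v v)"
    unfolding A(2) ..
  also have "\<dots> = (x * y) \<cdot>\<^sub>v v"
    by (simp add: smult_smult_assoc mult.commute)
  finally show ?thesis
    unfolding int_mat_eigenvalues_def using A B by (auto intro!: bexI[of _ "A * B"])
qed

lemma companion_eigenvalue:
  fixes a :: "nat \<Rightarrow> int" and \<rho> :: "'a :: comm_ring_1"
  assumes "d \<ge> 1" and root: "\<rho> ^ d = (\<Sum>i<d. of_int (a i) * \<rho> ^ i)"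
  shows "\<rho> \<in> int_mat_eigenvalues d (vec d (\<lambda>i. \<rho> ^ i))"
proof -
  define C where "C = mat d d (\<lambda>(i, j). if i = d - 1 then a j else if j = i + 1 then 1 else 0)"
  have C: "C \<in> carrier_mat d d"
    unfolding C_def by auto
  have "(\<Sum>j<d. of_int (C $$ (i, j)) * \<rho> ^ j) = \<rho> * \<rho> ^ i" if i: "i < d" for i
  proof (cases "i = d - 1")
    case True
    then have "(\<Sum>j<d. of_int (C $$ (i, j)) * \<rho> ^ j) = \<rho> ^ d"
      using i by (simp add: root C_def)
    also have "\<dots> = \<rho> * \<rho> ^ i"
      using True assms(1) by (cases d) auto
    finally show ?thesis .
  next
    case False
    then have "(\<Sum>j<d. of_int (C $$ (i, j)) * \<rho> ^ j) = (\<Sum>j<d. if j = i + 1 then \<rho> ^ j else 0)"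
      using i by (intro sum.cong) (auto simp: C_def)
    also have "\<dots> = \<rho> * \<rho> ^ i"
      using False i by simp
    finally show ?thesis .
  qed
  then have "map_mat of_int C *\<^sub>v vec d (\<lambda>i. \<rho> ^ i) = \<rho> \<cdot>\<^sub>v vec d (\<lambda>i. \<rho> ^ i)"
    using C by (intro eq_vecI) (auto simp: scalar_prod_def atLeast0LessThan)
  then show ?thesis
    unfolding int_mat_eigenvalues_def using C by blast
qed

lemma zero_one_poly_mem:
  fixes \<rho> :: "'a :: semiring_1"
  assumes "0 \<in> S" "1 \<in> S" "\<rho> \<in> S"
    and "\<And>x y. x \<in> S \<Longrightarrow> y \<in> S \<Longrightarrow> x + y \<in> S"
    and "\<And>x y. x \<in> S \<Longrightarrow> y \<in> S \<Longrightarrow> x * y \<in> S"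
    and "\<forall>k. zs k \<in> {0, 1}"
  shows "(\<Sum>k=0..n. zs k * \<rho> ^ k) \<in> S"
proof -
  have "\<rho> ^ k \<in> S" for k
    using assms by (induction k) auto
  then have summand: "zs k * \<rho> ^ k \<in> S" for k
    using assms(1,6) by (cases "zs k = 0") auto
  show ?thesis
  proof (induction n)
    case 0
    show ?case
      using summand[of 0] by simp
  next
    case (Suc n)
    then show ?case
      using summand[of "Suc n"] assms(4) by simp
  qed
qed

lemma rat_adjoin_self: "\<rho> \<in> rat_adjoin \<rho>"
  unfolding rat_adjoin_def by auto

lemma zero_one_poly_in_rat_adjoin:
  assumes "\<forall>k. zs k \<in> {0, 1}"
  shows "(\<Sum>k=0..n. zs k * \<rho> ^ k) \<in> rat_adjoin \<rho>"
  unfolding rat_adjoin_def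
  by (intro InterI, rule zero_one_poly_mem) (use assms in \<open>auto simp: subfield_real_def\<close>)

lemma zero_one_poly_bounds:
  fixes \<rho> :: real
  assumes "0 \<le> \<rho>" "\<forall>k. zs k \<in> {0, 1}"
  shows "0 \<le> (\<Sum>k=0..n. zs k * \<rho> ^ k)" "(\<Sum>k=0..n. zs k * \<rho> ^ k) \<le> (\<Sum>k=0..n. \<rho> ^ k)"
proof -
  have "0 \<le> zs k * \<rho> ^ k \<and> zs k * \<rho> ^ k \<le> \<rho> ^ k" for k
    using assms by (cases "zs k = 0") auto
  then show "0 \<le> (\<Sum>k=0..n. zs k * \<rho> ^ k)" "(\<Sum>k=0..n. zs k * \<rho> ^ k) \<le> (\<Sum>k=0..n. \<rho> ^ k)"
    by (auto intro: sum_nonneg sum_mono)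
qed

lemma Zrho_pos_imp_zero_one_poly:
  assumes "x \<in> Zrho \<rho>" "0 < x" "0 \<le> \<rho>"
  obtains n zs where "\<forall>k. zs k \<in> {0, 1}" "x = (\<Sum>k=0..n. zs k * \<rho> ^ k)"
proof -
  obtain n zs where zs: "\<forall>k. zs k \<in> {0, 1}"
    and x: "x = (\<Sum>k=0..n. zs k * \<rho> ^ k) \<or> x = - (\<Sum>k=0..n. zs k * \<rho> ^ k)"
    using assms(1) unfolding Zrho_def by auto
  then show ?thesis
    using that zero_one_poly_bounds(1)[OF assms(3) zs, of n] assms(2) by force
qed

lemma zero_one_poly_split_top_digit:
  fixes \<rho> :: real
  assumes "0 \<le> \<rho>" and zs: "\<forall>k. zs k \<in> {0, 1}"
    and large: "(\<Sum>k=0..n0. \<rho> ^ k) < (\<Sum>k=0..n. zs k * \<rho> ^ k)"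
  obtains j where "n0 < j" "(\<Sum>k=0..n. zs k * \<rho> ^ k) = (\<Sum>k<j. zs k * \<rho> ^ k) + \<rho> ^ j"
proof -
  define D where "D = {k \<in> {0..n}. zs k = 1}"
  have "D \<noteq> {}"
  proof
    assume "D = {}"
    then have "zs k = 0" if "k \<le> n" for k
      using that zs unfolding D_def by auto
    then show False
      using large zero_one_poly_bounds(1)[OF assms(1), of "\<lambda>_. 1" n0] by simp
  qed
  define j where "j = Max D"
  have j: "j \<le> n" "zs j = 1" and above_j: "\<And>k. k \<le> n \<Longrightarrow> j < k \<Longrightarrow> zs k = 0"
    using Max_in[of D] Max_ge[of D] \<open>D \<noteq> {}\<close> zs unfolding j_def D_def
    by (fastforce, fastforce, force)
  have upto_j: "(\<Sum>k=0..n. zs k * \<rho> ^ k) = (\<Sum>k=0..j. zs k * \<rho> ^ k)"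
    using j(1) above_j by (intro sum.mono_neutral_right) auto
  have "n0 < j"
  proof (rule ccontr)
    assume "\<not> n0 < j"
    then have "(\<Sum>k=0..j. \<rho> ^ k) \<le> (\<Sum>k=0..n0. \<rho> ^ k)"
      using assms(1) by (intro sum_mono2) auto
    then show False
      using large upto_j zero_one_poly_bounds(2)[OF assms(1) zs, of j] by linarith
  qed
  moreover have "(\<Sum>k=0..j. zs k * \<rho> ^ k) = (\<Sum>k<j. zs k * \<rho> ^ k) + \<rho> ^ j"
    using j(2) by (simp add: atLeast0AtMost lessThan_Suc_atMost[symmetric])
  ultimately show ?thesis
    using that upto_j by simp
qed

lemma of_int_floor_zero_one:
  fixes z :: "'a :: floor_ceiling"
  shows "z \<in> {0, 1} \<Longrightarrow> of_int \<lfloor>z\<rfloor> = z"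
  by auto

lemma Zrho_multiples_imp_monic_relation:
  fixes \<rho> lam :: real
  assumes "0 \<le> \<rho>" "0 < lam" "\<And>m :: nat. lam * real m \<in> Zrho \<rho>"
    and zs0: "\<forall>k. zs0 k \<in> {0, 1}" and lam: "lam = (\<Sum>k=0..n0. zs0 k * \<rho> ^ k)"
  obtains d and a :: "nat \<Rightarrow> int" where "d \<ge> 1" "\<rho> ^ d = (\<Sum>i<d. of_int (a i) * \<rho> ^ i)"
proof -
  obtain m :: nat where m: "(\<Sum>k=0..n0. \<rho> ^ k) < lam * real m"
    using reals_Archimedean3[OF assms(2)] by (auto simp: mult.commute)
  moreover have "0 \<le> (\<Sum>k=0..n0. \<rho> ^ k)"
    using assms(1) by (simp add: sum_nonneg)
  ultimately have "0 < lam * real m"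
    by linarith
  then obtain n zs where zs: "\<forall>k. zs k \<in> {0, 1}"
    and mlam: "lam * real m = (\<Sum>k=0..n. zs k * \<rho> ^ k)"
    using Zrho_pos_imp_zero_one_poly[OF assms(3) _ assms(1)] by blast
  obtain j where "n0 < j" and split: "lam * real m = (\<Sum>k<j. zs k * \<rho> ^ k) + \<rho> ^ j"
    using zero_one_poly_split_top_digit[OF assms(1) zs] m unfolding mlam by blast
  define b where "b i = (if i \<le> n0 then zs0 i else 0)" for i
  have "(\<Sum>i<j. b i * \<rho> ^ i) = (\<Sum>i<j. if i \<le> n0 then zs0 i * \<rho> ^ i else 0)"
    unfolding b_def by (intro sum.cong) auto
  also have "\<dots> = (\<Sum>i \<in> {..<j} \<inter> {i. i \<le> n0}. zs0 i * \<rho> ^ i)"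
    by (simp add: sum.inter_restrict)
  also have "{..<j} \<inter> {i. i \<le> n0} = {0..n0}"
    using \<open>n0 < j\<close> by auto
  finally have "lam = (\<Sum>i<j. b i * \<rho> ^ i)"
    unfolding lam ..
  with split have "\<rho> ^ j = (\<Sum>i<j. (real m * b i - zs i) * \<rho> ^ i)"
    by (simp add: algebra_simps sum_subtractf sum_distrib_left)
  moreover have "b i \<in> {0, 1}" "zs i \<in> {0, 1}" for i
    using zs0 zs unfolding b_def by auto
  then have "real m * b i - zs i = of_int (int m * \<lfloor>b i\<rfloor> - \<lfloor>zs i\<rfloor>)" for i
    by (simp add: of_int_floor_zero_one)
  ultimately have "\<rho> ^ j = (\<Sum>i<j. of_int (int m * \<lfloor>b i\<rfloor> - \<lfloor>zs i\<rfloor>) * \<rho> ^ i)"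
    by simp
  then show ?thesis
    using \<open>n0 < j\<close> by (intro that[of j "\<lambda>i. int m * \<lfloor>b i\<rfloor> - \<lfloor>zs i\<rfloor>"]) simp_all
qed

theorem mainTheorem13:
  fixes \<rho> lam :: real
  assumes "1 < \<rho>" and "\<rho> < 2"
    and "lam > 0"
    and "(%m. lam * m) ` \<int> \<subseteq> Zrho \<rho>"
  shows "(algebraic lam \<longleftrightarrow> algebraic \<rho>) \<and>
         (algebraic \<rho> \<longrightarrow> \<rho> \<in> rat_adjoin \<rho> \<and> lam \<in> rat_adjoin \<rho> \<and>
             algebraic_int \<rho> \<and> algebraic_int lam)"
proof -
  have \<rho>: "0 \<le> \<rho>"
    using assms(1) by simp
  have multiples: "lam * real m \<in> Zrho \<rho>" for m :: nat
    using assms(4) by (metis Ints_of_nat image_subset_iff)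
  have "lam \<in> Zrho \<rho>"
    using multiples[of 1] by simp
  then obtain n0 zs0 where zs0: "\<forall>k. zs0 k \<in> {0, 1}" and lam: "lam = (\<Sum>k=0..n0. zs0 k * \<rho> ^ k)"
    using Zrho_pos_imp_zero_one_poly[OF _ assms(3) \<rho>] by blast
  obtain d a where "d \<ge> 1" "\<rho> ^ d = (\<Sum>i<d. of_int (a i) * \<rho> ^ i)"
    using Zrho_multiples_imp_monic_relation[OF \<rho> assms(3) multiples zs0 lam] .
  define v where "v = vec d (\<lambda>i. \<rho> ^ i)"
  have v: "v \<in> carrier_vec d" "v \<noteq> 0\<^sub>v d"
    using \<open>d \<ge> 1\<close> unfolding v_def by (auto simp: vec_eq_iff intro!: exI[of _ 0])
  have \<rho>_eig: "\<rho> \<in> int_mat_eigenvalues d v"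
    unfolding v_def by (rule companion_eigenvalue) fact+
  have "lam \<in> int_mat_eigenvalues d v"
    unfolding lam using \<rho>_eig zs0 v(1)
    by (intro zero_one_poly_mem int_mat_eigenvalues_zero int_mat_eigenvalues_one
        int_mat_eigenvalues_add int_mat_eigenvalues_mult)
  then have "algebraic_int \<rho>" "algebraic_int lam"
    using \<rho>_eig int_mat_eigenvalues_algebraic_int[OF _ v] by auto
  moreover have "lam \<in> rat_adjoin \<rho>"
    unfolding lam by (rule zero_one_poly_in_rat_adjoin[OF zs0])
  ultimately show ?thesis
    using rat_adjoin_self by auto
qed

end
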